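(* Let $\{c_n\}_{n\ge1}$ be a real sequence with $\sum_{n=1}^\infty (c_n)^2<+\infty$ and $\sum_{n=N}^\infty (c_n)^2>0$ for every $N\ge1$. If $$\lim_{N\to\infty}\frac{(c_N)^2}{\sum_{n=N}^\infty (c_n)^2}=0,$$ then $$\lim_{N\to\infty}\frac{\sup_{n\ge N}(c_n)^2}{\sum_{n=N}^\infty (c_n)^2}=0.$$ *)

theory Defs
  imports "HOL-Analysis.Analysis"
begin

end

theory Submission
  imports Defs
begin

(* The tails T N = (\<Sum>k. c (k + N)^2) decrease in N. Hence if c n^2 \<le> \<epsilon> T n for all
   n \<ge> N, then also c n^2 \<le> \<epsilon> T N for all n \<ge> N, i.e. sup_{n \<ge> N} c n^2 \<le> \<epsilon> T N. *)

lemma decseq_suminf_tail: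
  fixes f :: "nat \<Rightarrow> real"
  assumes "summable f" and "\<And>n. 0 \<le> f n"
  shows "decseq (\<lambda>N. \<Sum>k. f (k + N))"
proof (rule decseq_SucI)
  fix N
  have "(\<Sum>k. f (k + Suc N)) = (\<Sum>k. f k) - (\<Sum>i<N. f i) - f N"
    using suminf_minus_initial_segment[OF \<open>summable f\<close>, of "Suc N"] by simp
  also have "\<dots> \<le> (\<Sum>k. f (k + N))"
    using suminf_minus_initial_segment[OF \<open>summable f\<close>, of N] assms(2) by simp
  finally show "(\<Sum>k. f (k + Suc N)) \<le> (\<Sum>k. f (k + N))" .
qed

lemma SUP_from_nonneg_le_of_ratio_less:
  fixes f T :: "nat \<Rightarrow> real"
  assumes "decseq T" and nonneg: "\<And>n. 0 \<le> f n"
    and ratio: "\<And>n. n \<ge> N \<Longrightarrow> T n > 0 \<and> f n / T n < \<epsilon>" and "\<epsilon> > 0"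
  shows "0 \<le> (SUP n\<in>{N..}. f n) \<and> (SUP n\<in>{N..}. f n) \<le> \<epsilon> * T N"
proof -
  have bound: "f n \<le> \<epsilon> * T N" if "n \<ge> N" for n
  proof -
    have "T n > 0" "f n / T n < \<epsilon>" "T n \<le> T N"
      using ratio decseqD[OF \<open>decseq T\<close>] that by auto
    then have "f n < \<epsilon> * T n" by (simp add: divide_less_eq mult.commute)
    also have "\<dots> \<le> \<epsilon> * T N" using \<open>T n \<le> T N\<close> \<open>\<epsilon> > 0\<close> by simp
    finally show ?thesis by simp
  qed
  then have "bdd_above (f ` {N..})" by (intro bdd_aboveI2[where M = "\<epsilon> * T N"]) auto
  then have "0 \<le> (SUP n\<in>{N..}. f n)"
    using nonneg cSUP_upper2[of f "{N..}" N] by auto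
  moreover have "(SUP n\<in>{N..}. f n) \<le> \<epsilon> * T N"
    using bound by (intro cSUP_least) auto
  ultimately show ?thesis ..
qed

lemma SUP_from_over_decseq_tendsto_zero:
  fixes f T :: "nat \<Rightarrow> real"
  assumes nonneg: "\<And>n. 0 \<le> f n"
    and "decseq T"
    and pos: "eventually (\<lambda>n. T n > 0) sequentially"
    and ratio: "(\<lambda>n. f n / T n) \<longlonglongrightarrow> 0"
  shows "(\<lambda>N. (SUP n\<in>{N..}. f n) / T N) \<longlonglongrightarrow> 0"
proof (rule LIMSEQ_I)
  fix r :: real assume "0 < r"
  have "eventually (\<lambda>n. T n > 0 \<and> f n / T n < r / 2) sequentially"
    using pos order_tendstoD(2)[OF ratio, of "r / 2"] \<open>0 < r\<close> by (auto intro: eventually_conj)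
  then obtain M where M: "\<And>n. n \<ge> M \<Longrightarrow> T n > 0 \<and> f n / T n < r / 2"
    unfolding eventually_sequentially by blast
  have "norm ((SUP n\<in>{N..}. f n) / T N - 0) < r" if "N \<ge> M" for N
  proof -
    have "T N > 0" using M that by blast
    moreover have "0 \<le> (SUP n\<in>{N..}. f n) \<and> (SUP n\<in>{N..}. f n) \<le> r / 2 * T N"
      using SUP_from_nonneg_le_of_ratio_less[OF \<open>decseq T\<close> nonneg, where N = N and \<epsilon> = "r / 2"] M that \<open>0 < r\<close>
      by simp
    moreover have "0 < r * T N" using \<open>T N > 0\<close> \<open>0 < r\<close> by simp
    ultimately show ?thesis by (simp add: divide_less_eq)
  qed
  then show "\<exists>M. \<forall>N\<ge>M. norm ((SUP n\<in>{N..}. f n) / T N - 0) < r" by blast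
qed

theorem lemma2p5:
  fixes c :: "nat \<Rightarrow> real"
  assumes summ: "summable (\<lambda>n. (c (Suc n))\<^sup>2)"
    and pos: "\<And>N. N \<ge> 1 \<Longrightarrow> (\<Sum>k. (c (k + N))\<^sup>2) > 0"
    and lim: "(\<lambda>N. (c N)\<^sup>2 / (\<Sum>k. (c (k + N))\<^sup>2)) \<longlonglongrightarrow> 0"
  shows "(\<lambda>N. (SUP n\<in>{N..}. (c n)\<^sup>2) / (\<Sum>k. (c (k + N))\<^sup>2)) \<longlonglongrightarrow> 0"
proof (rule SUP_from_over_decseq_tendsto_zero[OF _ _ _ lim])
  have "summable (\<lambda>n. (c n)\<^sup>2)"
    using summ summable_Suc_iff by blast
  then show "decseq (\<lambda>N. \<Sum>k. (c (k + N))\<^sup>2)"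
    by (rule decseq_suminf_tail) simp
  show "eventually (\<lambda>N. (\<Sum>k. (c (k + N))\<^sup>2) > 0) sequentially"
    using pos unfolding eventually_sequentially by blast
qed simp

end
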